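(* Let $K\subseteq\mathbb{R}^d$ be a proper locally anti-blocking body and $i\in\{1,\dots,d\}$. Then $$\mu_i(K)=\max\Big\{\mu(K\cap L_I): I\subseteq\{1,\dots,d\},\ |I|=i\Big\},$$ where $L_I=\operatorname{span}_{\mathbb{R}}\{e_k:k\in I\}$ and $\mu(K\cap L_I)$ is the covering radius of $K\cap L_I$ with respect to $\mathbb{Z}^d\cap L_I$ inside $L_I$.
   Context: A convex body is a full-dimensional compact convex set. For $I\subseteq\{1,\dots,d\}$, $L_I$ is the coordinate subspace spanned by the standard basis vectors $e_k$, $k\in I$, and $\pi_{L_I}$ the orthogonal projection onto it. A convex body $K\subseteq\mathbb{R}^d$ is locally anti-blocking if $K\cap L_I=\pi_{L_I}(K)$ for every $I\subseteq\{1,\dots,d\}$; it is proper if it contains the origin in its interior. For $i\in\{1,\dots,d\}$, $\mu_i(K)=\min\{\mu\ge0:(\mu K+\mathbb{Z}^d)\cap U\ne\emptyset$ for every $(d-i)$-dimensional affine subspace $U\subseteq\mathbb{R}^d\}$. For a convex body $C$ in a subspace $E$ with lattice $\Gamma\subseteq E$, the covering radius is $\min\{\mu\ge0:\mu C+\Gamma=E\}$. *)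

theory Defs
  imports "HOL-Analysis.Analysis"
begin

text \<open>We work in R^d rendered as real^'n, with d = CARD('n); coordinates are indexed by 'n.\<close>

definition convex_body :: "(real^'n) set \<Rightarrow> bool" where
  "convex_body K \<longleftrightarrow> convex K \<and> compact K \<and> interior K \<noteq> {}"

definition coord_subspace :: "'n set \<Rightarrow> (real^'n) set" where
  "coord_subspace I = span ((\<lambda>k. axis k (1::real)) ` I)"

definition coord_proj :: "'n set \<Rightarrow> real^'n \<Rightarrow> real^'n" where
  "coord_proj I x = (\<chi> k. if k \<in> I then x $ k else 0)"

definition locally_anti_blocking :: "(real^'n) set \<Rightarrow> bool" where
  "locally_anti_blocking K \<longleftrightarrow> convex_body K \<and>
     (\<forall>I. K \<inter> coord_subspace I = coord_proj I ` K)"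

definition proper_body :: "(real^'n) set \<Rightarrow> bool" where
  "proper_body K \<longleftrightarrow> 0 \<in> interior K"

definition int_lattice :: "(real^'n) set" where
  "int_lattice = {x. \<forall>k. x $ k \<in> \<int>}"

definition dil_plus :: "real \<Rightarrow> (real^'n) set \<Rightarrow> (real^'n) set \<Rightarrow> (real^'n) set" where
  "dil_plus \<mu> C G = {\<mu> *\<^sub>R c + g | c g. c \<in> C \<and> g \<in> G}"

definition mu_i :: "(real^'n) set \<Rightarrow> nat \<Rightarrow> real" where
  "mu_i K i = Inf {\<mu>. \<mu> \<ge> 0 \<and>
     (\<forall>U. affine U \<and> U \<noteq> {} \<and> aff_dim U = int CARD('n) - int i \<longrightarrow>
          dil_plus \<mu> K int_lattice \<inter> U \<noteq> {})}"

definition covering_radius :: "(real^'n) set \<Rightarrow> (real^'n) set \<Rightarrow> (real^'n) set \<Rightarrow> real" where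
  "covering_radius C E G = Inf {\<mu>. \<mu> \<ge> 0 \<and> dil_plus \<mu> C G = E}"

end

theory Submission
  imports Defs
begin

text \<open>
  If \<open>\<mu>K + \<int>\<^sup>d\<close> meets every affine subspace of dimension \<open>d - |I|\<close>, it meets every
  translate \<open>x + L\<^bsub>-I\<^esub>\<close> with \<open>x \<in> L\<^sub>I\<close>. Projecting a meeting point by \<open>\<pi>\<^sub>I\<close>, which maps
  \<open>K\<close> onto \<open>K \<inter> L\<^sub>I\<close> (local anti-blocking) and \<open>\<int>\<^sup>d\<close> into \<open>\<int>\<^sup>d \<inter> L\<^sub>I\<close>, shows that
  \<open>\<mu>(K \<inter> L\<^sub>I) + (\<int>\<^sup>d \<inter> L\<^sub>I)\<close> covers \<open>L\<^sub>I\<close>. Conversely, the direction space of a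
  \<open>(d - i)\<close>-dimensional affine subspace \<open>U\<close> has a complementary coordinate subspace
  \<open>L\<^sub>I\<close> with \<open>|I| = i\<close>, so \<open>U\<close> meets \<open>L\<^sub>I\<close>; hence \<open>U\<close> meets \<open>\<mu>K + \<int>\<^sup>d\<close> as soon as
  \<open>\<mu>\<close> exceeds the covering radius of every section \<open>K \<inter> L\<^sub>I\<close> with \<open>|I| = i\<close>.
\<close>

lemma coord_subspace_eq:
  fixes I :: "'n::finite set"
  shows "coord_subspace I = {x. \<forall>k. k \<notin> I \<longrightarrow> x $ k = 0}"
proof
  have "subspace {x::real^'n. \<forall>k. k \<notin> I \<longrightarrow> x $ k = 0}"
    by (auto simp: subspace_def)
  then show "coord_subspace I \<subseteq> {x. \<forall>k. k \<notin> I \<longrightarrow> x $ k = 0}"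
    unfolding coord_subspace_def by (rule span_minimal[rotated]) (auto simp: axis_def)
next
  show "{x::real^'n. \<forall>k. k \<notin> I \<longrightarrow> x $ k = 0} \<subseteq> coord_subspace I"
  proof
    fix x :: "real^'n"
    assume x: "x \<in> {x. \<forall>k. k \<notin> I \<longrightarrow> x $ k = 0}"
    have "x = (\<Sum>k\<in>I. x $ k *\<^sub>R axis k 1)"
    proof (subst vec_eq_iff, intro allI)
      fix j
      show "x $ j = (\<Sum>k\<in>I. x $ k *\<^sub>R axis k 1) $ j"
        using x by (cases "j \<in> I") (auto simp: axis_def if_distrib sum.delta cong: if_cong)
    qed
    also have "\<dots> \<in> coord_subspace I"
      unfolding coord_subspace_def by (intro span_sum span_mul span_base) auto
    finally show "x \<in> coord_subspace I" .
  qed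
qed

lemma coord_subspace_UNIV [simp]: "coord_subspace UNIV = UNIV"
  by (simp add: coord_subspace_eq)

lemma subspace_coord_subspace: "subspace (coord_subspace I)"
  unfolding coord_subspace_def by (rule subspace_span)

lemma dim_coord_subspace: "dim (coord_subspace (I :: 'n::finite set)) = card I"
proof -
  have inj: "inj_on (\<lambda>k::'n. axis k (1::real)) I"
    by (auto simp: inj_on_def axis_eq_axis)
  have "independent ((\<lambda>k::'n. axis k (1::real)) ` I)"
    by (rule independent_mono[OF independent_Basis]) auto
  then show ?thesis
    unfolding coord_subspace_def dim_span
    using dim_eq_card_independent card_image[OF inj] by metis
qed

lemma aff_dim_coord_subspace: "aff_dim (coord_subspace I) = int (card I)"
  by (simp add: aff_dim_subspace subspace_coord_subspace dim_coord_subspace)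

lemma coord_proj_scaleR_add: "coord_proj I (\<mu> *\<^sub>R c + g) = \<mu> *\<^sub>R coord_proj I c + coord_proj I g"
  by (simp add: coord_proj_def vec_eq_iff)

lemma coord_proj_in_coord_subspace: "coord_proj I x \<in> coord_subspace I"
  by (simp add: coord_proj_def coord_subspace_eq)

lemma coord_proj_add_complement:
  assumes "x \<in> coord_subspace I" "w \<in> coord_subspace (- I)"
  shows "coord_proj I (x + w) = x"
  using assms by (auto simp: coord_proj_def coord_subspace_eq vec_eq_iff)

lemma coord_proj_int_lattice: "g \<in> int_lattice \<Longrightarrow> coord_proj I g \<in> int_lattice"
  by (simp add: coord_proj_def int_lattice_def)

text \<open>
  Extending a basis of \<open>V\<close> by standard basis vectors to a basis of the whole space
  uses at most \<open>i\<close> of them.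
\<close>
lemma coord_subspace_complement_exists:
  fixes V :: "(real^'n) set"
  assumes V: "subspace V" and dim: "dim V + i = CARD('n)"
  shows "\<exists>I. card I = i \<and> (\<forall>z. \<exists>v\<in>V. \<exists>l\<in>coord_subspace I. z = v + l)"
proof -
  obtain B where B: "B \<subseteq> V" "independent B" "V \<subseteq> span B" "card B = dim V"
    by (rule basis_exists)
  define A where "A = range (\<lambda>k::'n. axis k (1::real))"
  obtain C where C: "B \<subseteq> C" "C \<subseteq> B \<union> A" "independent C" "B \<union> A \<subseteq> span C"
    using maximal_independent_subset_extend[of B "B \<union> A"] B(2) by blast
  have "finite C" "card C \<le> CARD('n)"
    using independent_bound[OF C(3)] by simp_all
  define J where "J = {k. axis k (1::real) \<in> C - B}"
  have CB: "C - B = (\<lambda>k. axis k 1) ` J"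
    using C(2) unfolding J_def A_def by auto
  have "card J = card (C - B)"
    unfolding CB by (rule card_image[symmetric]) (auto simp: inj_on_def axis_eq_axis)
  also have "\<dots> = card C - card B"
    using C(1) \<open>finite C\<close> by (meson card_Diff_subset finite_subset)
  also have "\<dots> \<le> i"
    using \<open>card C \<le> CARD('n)\<close> B(4) dim by linarith
  finally obtain I where I: "J \<subseteq> I" "card I = i"
    using exists_subset_between[of J i "UNIV::'n set"] dim by auto
  have "\<exists>v\<in>V. \<exists>l\<in>coord_subspace I. z = v + l" for z
  proof -
    have "span A = UNIV"
      using coord_subspace_UNIV unfolding coord_subspace_def A_def by simp
    then have "z \<in> span C"
      using C(4) span_minimal[of A "span C"] by auto
    also have "span C = span (B \<union> (C - B))"
      using C(1) by (simp add: Un_absorb1)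
    finally obtain b c where bc: "z = b + c" "b \<in> span B" "c \<in> span (C - B)"
      unfolding span_Un by blast
    have "b \<in> V"
      using bc(2) B(1) V span_minimal by blast
    moreover have "c \<in> coord_subspace I"
      using bc(3) span_mono[OF image_mono[OF I(1)]] unfolding CB coord_subspace_def by blast
    ultimately show ?thesis
      using bc(1) by blast
  qed
  then show ?thesis
    using I(2) by blast
qed

lemma affine_meets_coord_subspace:
  fixes U :: "(real^'n) set"
  assumes U: "affine U" "U \<noteq> {}" "aff_dim U = int CARD('n) - int i" and "i \<le> CARD('n)"
  shows "\<exists>I. card I = i \<and> U \<inter> coord_subspace I \<noteq> {}"
proof -
  obtain u where "u \<in> U"
    using U(2) by blast
  define V where "V = (\<lambda>x. x - u) ` U"
  have "subspace V"
    unfolding V_def using affine_diffs_subspace_subtract U(1) \<open>u \<in> U\<close> by blast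
  have "aff_dim U = int (dim V)"
    unfolding V_def by (rule aff_dim_eq_dim_subtract) (simp add: \<open>u \<in> U\<close> hull_inc)
  then have "dim V + i = CARD('n)"
    using U(3) \<open>i \<le> CARD('n)\<close> by linarith
  then obtain I where I: "card I = i" "\<forall>z. \<exists>v\<in>V. \<exists>l\<in>coord_subspace I. z = v + l"
    using coord_subspace_complement_exists[OF \<open>subspace V\<close>] by blast
  then obtain v l where vl: "v \<in> V" "l \<in> coord_subspace I" "- u = v + l"
    by blast
  have "u + v \<in> U"
    using vl(1) unfolding V_def by auto
  moreover have "u + v = - l"
    using vl(3) by (simp add: neg_eq_iff_add_eq_0 eq_neg_iff_add_eq_0 add.assoc)
  then have "u + v \<in> coord_subspace I"
    using vl(2) subspace_coord_subspace subspace_neg by metis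
  ultimately show ?thesis
    using I(1) by blast
qed

lemma dil_plus_mono:
  assumes "C \<subseteq> C'" "G \<subseteq> G'"
  shows "dil_plus \<mu> C G \<subseteq> dil_plus \<mu> C' G'"
  using assms unfolding dil_plus_def by blast

lemma dil_plus_subset_subspace:
  assumes "subspace E" "C \<subseteq> E" "G \<subseteq> E"
  shows "dil_plus \<mu> C G \<subseteq> E"
  using assms unfolding dil_plus_def by (auto intro!: subspace_add subspace_scale)

lemma dil_plus_mono_factor:
  assumes "convex C" "0 \<in> C" "0 \<le> \<mu>" "\<mu> \<le> \<mu>'"
  shows "dil_plus \<mu> C G \<subseteq> dil_plus \<mu>' C G"
proof
  fix x
  assume "x \<in> dil_plus \<mu> C G"
  then obtain c g where x: "x = \<mu> *\<^sub>R c + g" "c \<in> C" "g \<in> G"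
    unfolding dil_plus_def by blast
  show "x \<in> dil_plus \<mu>' C G"
  proof (cases "\<mu>' = 0")
    case True
    then show ?thesis
      using x assms(3,4) unfolding dil_plus_def by auto
  next
    case False
    have "(\<mu> / \<mu>') *\<^sub>R c + (1 - \<mu> / \<mu>') *\<^sub>R 0 \<in> C"
      using assms False x(2) by (intro convexD) auto
    then have "(\<mu> / \<mu>') *\<^sub>R c \<in> C"
      by simp
    moreover have "x = \<mu>' *\<^sub>R ((\<mu> / \<mu>') *\<^sub>R c) + g"
      using False x(1) by simp
    ultimately show ?thesis
      using x(3) unfolding dil_plus_def by blast
  qed
qed

lemma covering_radius_le:
  assumes "0 \<le> \<mu>" "dil_plus \<mu> C G = E"
  shows "covering_radius C E G \<le> \<mu>"
  unfolding covering_radius_def using assms by (intro cInf_lower) (auto intro: bdd_belowI[of _ 0])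

lemma covering_radius_nonneg:
  assumes "0 \<le> \<mu>" "dil_plus \<mu> C G = E"
  shows "0 \<le> covering_radius C E G"
  unfolding covering_radius_def using assms by (intro cInf_greatest) auto

lemma covers_above_covering_radius:
  assumes "subspace E" "convex C" "0 \<in> C" "C \<subseteq> E" "G \<subseteq> E"
    and "0 \<le> \<mu>\<^sub>0" "dil_plus \<mu>\<^sub>0 C G = E"
    and "covering_radius C E G < \<mu>"
  shows "dil_plus \<mu> C G = E"
proof -
  obtain m where m: "0 \<le> m" "dil_plus m C G = E" "m < \<mu>"
    using assms(6-8) cInf_lessD[of "{\<mu>. 0 \<le> \<mu> \<and> dil_plus \<mu> C G = E}" \<mu>]
    unfolding covering_radius_def by auto
  have "E \<subseteq> dil_plus \<mu> C G"
    using m dil_plus_mono_factor[OF assms(2,3), of m \<mu> G] by simp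
  then show ?thesis
    using dil_plus_subset_subspace[OF assms(1,4,5)] by blast
qed

text \<open>Rounding down every coordinate leaves a remainder of \<open>\<ell>\<^sub>1\<close>-norm less than \<open>d\<close>.\<close>
lemma int_lattice_covers_coord_subspace:
  fixes K :: "(real^'n) set"
  assumes "ball 0 r \<subseteq> K" "0 < r" "real CARD('n) < \<mu> * r"
  shows "dil_plus \<mu> (K \<inter> coord_subspace I) (int_lattice \<inter> coord_subspace I) = coord_subspace I"
proof
  have "0 < \<mu> * r"
    using assms(3) of_nat_0_le_iff le_less_trans by blast
  then have "0 < \<mu>"
    using assms(2) by (simp add: zero_less_mult_iff)
  show "coord_subspace I \<subseteq> dil_plus \<mu> (K \<inter> coord_subspace I) (int_lattice \<inter> coord_subspace I)"
  proof
    fix x :: "real^'n"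
    assume x: "x \<in> coord_subspace I"
    define g :: "real^'n" where "g = (\<chi> k. of_int \<lfloor>x $ k\<rfloor>)"
    have g: "g \<in> int_lattice \<inter> coord_subspace I"
      using x by (simp add: g_def int_lattice_def coord_subspace_eq)
    define f where "f = x - g"
    have "norm f \<le> (\<Sum>k\<in>UNIV. \<bar>f $ k\<bar>)"
      by (rule norm_le_l1_cart)
    also have "\<dots> \<le> (\<Sum>k\<in>(UNIV::'n set). 1)"
      by (rule sum_mono) (simp add: f_def g_def, linarith)
    also have "\<dots> < \<mu> * r"
      using assms(3) by simp
    finally have "norm ((1 / \<mu>) *\<^sub>R f) < r"
      using \<open>0 < \<mu>\<close> by (simp add: field_simps)
    then have "(1 / \<mu>) *\<^sub>R f \<in> K"
      using assms(1) by auto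
    moreover have "(1 / \<mu>) *\<^sub>R f \<in> coord_subspace I"
      using x g subspace_coord_subspace unfolding f_def by (blast intro: subspace_scale subspace_diff)
    moreover have "x = \<mu> *\<^sub>R ((1 / \<mu>) *\<^sub>R f) + g"
      using \<open>0 < \<mu>\<close> by (simp add: f_def)
    ultimately show "x \<in> dil_plus \<mu> (K \<inter> coord_subspace I) (int_lattice \<inter> coord_subspace I)"
      using g unfolding dil_plus_def by blast
  qed
qed (rule dil_plus_subset_subspace[OF subspace_coord_subspace]; blast)

lemma proper_body_coord_section_covered:
  fixes K :: "(real^'n) set"
  assumes "proper_body K"
  obtains \<mu> where "0 \<le> \<mu>"
    "dil_plus \<mu> (K \<inter> coord_subspace I) (int_lattice \<inter> coord_subspace I) = coord_subspace I"
proof -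
  obtain r where "0 < r" "ball 0 r \<subseteq> K"
    using assms unfolding proper_body_def by (meson mem_interior)
  show ?thesis
  proof (rule that)
    show "0 \<le> (CARD('n) + 1) / r"
      using \<open>0 < r\<close> by simp
    show "dil_plus ((CARD('n) + 1) / r) (K \<inter> coord_subspace I) (int_lattice \<inter> coord_subspace I)
        = coord_subspace I"
    proof (rule int_lattice_covers_coord_subspace[OF \<open>ball 0 r \<subseteq> K\<close> \<open>0 < r\<close>])
      show "real CARD('n) < (CARD('n) + 1) / r * r"
        using \<open>0 < r\<close> by simp
    qed
  qed
qed

lemma covering_radius_coord_section_nonneg:
  fixes K :: "(real^'n) set"
  assumes "proper_body K"
  shows "0 \<le> covering_radius (K \<inter> coord_subspace I) (coord_subspace I) (int_lattice \<inter> coord_subspace I)"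
proof -
  obtain \<mu> where "0 \<le> \<mu>"
    "dil_plus \<mu> (K \<inter> coord_subspace I) (int_lattice \<inter> coord_subspace I) = coord_subspace I"
    using proper_body_coord_section_covered[OF assms] .
  then show ?thesis
    by (rule covering_radius_nonneg)
qed

lemma coord_section_covers_above_covering_radius:
  fixes K :: "(real^'n) set"
  assumes "convex K" "proper_body K"
    and "covering_radius (K \<inter> coord_subspace I) (coord_subspace I) (int_lattice \<inter> coord_subspace I) < \<mu>"
  shows "dil_plus \<mu> (K \<inter> coord_subspace I) (int_lattice \<inter> coord_subspace I) = coord_subspace I"
proof -
  have "0 \<in> K"
    using \<open>proper_body K\<close> interior_subset unfolding proper_body_def by blast
  obtain \<mu>\<^sub>0 where \<mu>\<^sub>0: "0 \<le> \<mu>\<^sub>0"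
    "dil_plus \<mu>\<^sub>0 (K \<inter> coord_subspace I) (int_lattice \<inter> coord_subspace I) = coord_subspace I"
    using proper_body_coord_section_covered[OF \<open>proper_body K\<close>] .
  have "convex (K \<inter> coord_subspace I)"
    using assms(1) subspace_coord_subspace by (blast intro: convex_Int subspace_imp_convex)
  moreover have "0 \<in> K \<inter> coord_subspace I"
    using \<open>0 \<in> K\<close> subspace_0[OF subspace_coord_subspace] by blast
  ultimately show ?thesis
    using covers_above_covering_radius[OF subspace_coord_subspace _ _ _ _ \<mu>\<^sub>0 assms(3)] by blast
qed

lemma covering_radius_coord_section_le:
  fixes K :: "(real^'n) set"
  assumes lab: "locally_anti_blocking K" and "0 \<le> \<mu>"
    and meets: "\<And>U. affine U \<Longrightarrow> U \<noteq> {} \<Longrightarrow> aff_dim U = int CARD('n) - int (card I) \<Longrightarrow>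
                 dil_plus \<mu> K int_lattice \<inter> U \<noteq> {}"
  shows "covering_radius (K \<inter> coord_subspace I) (coord_subspace I) (int_lattice \<inter> coord_subspace I) \<le> \<mu>"
proof (rule covering_radius_le[OF \<open>0 \<le> \<mu>\<close>])
  have "x \<in> dil_plus \<mu> (K \<inter> coord_subspace I) (int_lattice \<inter> coord_subspace I)"
    if x: "x \<in> coord_subspace I" for x
  proof -
    define U where "U = (+) x ` coord_subspace (- I)"
    have "affine U"
      unfolding U_def by (intro affine_translation[THEN iffD1] subspace_imp_affine subspace_coord_subspace)
    moreover have "aff_dim U = int CARD('n) - int (card I)"
      unfolding U_def aff_dim_translation_eq aff_dim_coord_subspace
      by (simp add: Compl_eq_Diff_UNIV card_Diff_subset of_nat_diff card_mono)
    moreover have "U \<noteq> {}"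
      unfolding U_def using subspace_0[OF subspace_coord_subspace] by blast
    ultimately obtain y where "y \<in> dil_plus \<mu> K int_lattice" "y \<in> U"
      using meets by blast
    then obtain c g w where cgw: "c \<in> K" "g \<in> int_lattice" "w \<in> coord_subspace (- I)"
      "\<mu> *\<^sub>R c + g = x + w"
      unfolding U_def dil_plus_def by blast
    have "x = coord_proj I (\<mu> *\<^sub>R c + g)"
      using coord_proj_add_complement[OF x cgw(3)] cgw(4) by simp
    also have "\<dots> = \<mu> *\<^sub>R coord_proj I c + coord_proj I g"
      by (rule coord_proj_scaleR_add)
    finally have "x = \<mu> *\<^sub>R coord_proj I c + coord_proj I g" .
    moreover have "coord_proj I c \<in> K \<inter> coord_subspace I"
      using lab cgw(1) unfolding locally_anti_blocking_def by blast
    moreover have "coord_proj I g \<in> int_lattice \<inter> coord_subspace I"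
      using cgw(2) coord_proj_int_lattice coord_proj_in_coord_subspace by blast
    ultimately show ?thesis
      unfolding dil_plus_def by blast
  qed
  moreover have "dil_plus \<mu> (K \<inter> coord_subspace I) (int_lattice \<inter> coord_subspace I) \<subseteq> coord_subspace I"
    by (rule dil_plus_subset_subspace[OF subspace_coord_subspace]; blast)
  ultimately show "dil_plus \<mu> (K \<inter> coord_subspace I) (int_lattice \<inter> coord_subspace I) = coord_subspace I"
    by blast
qed

lemma covering_radius_coord_section_le_mu_i:
  fixes K :: "(real^'n) set"
  assumes lab: "locally_anti_blocking K" and "proper_body K"
  shows "covering_radius (K \<inter> coord_subspace I) (coord_subspace I) (int_lattice \<inter> coord_subspace I)
           \<le> mu_i K (card I)"
proof -
  obtain \<mu>\<^sub>0 where "0 \<le> \<mu>\<^sub>0" "dil_plus \<mu>\<^sub>0 K int_lattice = UNIV"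
    using proper_body_coord_section_covered[OF \<open>proper_body K\<close>, of UNIV] by auto
  define S where "S = {\<mu>. \<mu> \<ge> 0 \<and>
     (\<forall>U. affine U \<and> U \<noteq> {} \<and> aff_dim U = int CARD('n) - int (card I) \<longrightarrow>
          dil_plus \<mu> K int_lattice \<inter> U \<noteq> {})}"
  have "\<mu>\<^sub>0 \<in> S"
    unfolding S_def using \<open>0 \<le> \<mu>\<^sub>0\<close> \<open>dil_plus \<mu>\<^sub>0 K int_lattice = UNIV\<close> by auto
  moreover have "covering_radius (K \<inter> coord_subspace I) (coord_subspace I) (int_lattice \<inter> coord_subspace I)
      \<le> \<mu>" if "\<mu> \<in> S" for \<mu>
  proof (rule covering_radius_coord_section_le[OF lab])
    show "0 \<le> \<mu>" "\<And>U. affine U \<Longrightarrow> U \<noteq> {} \<Longrightarrow> aff_dim U = int CARD('n) - int (card I) \<Longrightarrow>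
        dil_plus \<mu> K int_lattice \<inter> U \<noteq> {}"
      using that unfolding S_def by blast+
  qed
  ultimately show ?thesis
    unfolding mu_i_def S_def[symmetric] by (blast intro: cInf_greatest)
qed

lemma mu_i_le_if_coord_subspaces_covered:
  fixes K :: "(real^'n) set"
  assumes "0 \<le> \<mu>" "i \<le> CARD('n)"
    and covered: "\<And>I. card I = i \<Longrightarrow> coord_subspace I \<subseteq> dil_plus \<mu> K int_lattice"
  shows "mu_i K i \<le> \<mu>"
proof -
  have "dil_plus \<mu> K int_lattice \<inter> U \<noteq> {}"
    if "affine U" "U \<noteq> {}" "aff_dim U = int CARD('n) - int i" for U
    using affine_meets_coord_subspace[OF that \<open>i \<le> CARD('n)\<close>] covered by blast
  then show ?thesis
    unfolding mu_i_def using \<open>0 \<le> \<mu>\<close> by (intro cInf_lower) (auto intro: bdd_belowI[of _ 0])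
qed

lemma mu_i_le_if_covering_radii_less:
  fixes K :: "(real^'n) set"
  assumes "convex K" "proper_body K" "i \<le> CARD('n)"
    and less: "\<And>I. card I = i \<Longrightarrow>
      covering_radius (K \<inter> coord_subspace I) (coord_subspace I) (int_lattice \<inter> coord_subspace I) < \<mu>"
  shows "mu_i K i \<le> \<mu>"
proof (rule mu_i_le_if_coord_subspaces_covered[OF _ \<open>i \<le> CARD('n)\<close>])
  obtain I\<^sub>0 :: "'n set" where "card I\<^sub>0 = i"
    using obtain_subset_with_card_n[of i UNIV] \<open>i \<le> CARD('n)\<close> by auto
  then show "0 \<le> \<mu>"
    using less covering_radius_coord_section_nonneg[OF assms(2), of I\<^sub>0] by fastforce
  fix I :: "'n set"
  assume "card I = i"
  then have "dil_plus \<mu> (K \<inter> coord_subspace I) (int_lattice \<inter> coord_subspace I) = coord_subspace I"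
    by (intro coord_section_covers_above_covering_radius[OF assms(1,2)] less)
  then show "coord_subspace I \<subseteq> dil_plus \<mu> K int_lattice"
    using dil_plus_mono[of "K \<inter> coord_subspace I" K "int_lattice \<inter> coord_subspace I"] by blast
qed

theorem corollary3p3:
  fixes K :: "(real^'n) set" and i :: nat
  assumes "locally_anti_blocking K" and "proper_body K"
    and "1 \<le> i" and "i \<le> CARD('n)"
  shows "mu_i K i = Max {covering_radius (K \<inter> coord_subspace I) (coord_subspace I)
                           (int_lattice \<inter> coord_subspace I) | I. card I = i}"
proof -
  define cov where
    "cov I = covering_radius (K \<inter> coord_subspace I) (coord_subspace I) (int_lattice \<inter> coord_subspace I)"
    for I :: "'n set"
  define M where "M = Max {cov I | I. card I = i}"
  have "convex K"
    using assms(1) unfolding locally_anti_blocking_def convex_body_def by blast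
  obtain I\<^sub>0 :: "'n set" where "card I\<^sub>0 = i"
    using obtain_subset_with_card_n[of i UNIV] \<open>i \<le> CARD('n)\<close> by auto
  have cov_le_M: "cov I \<le> M" if "card I = i" for I
    unfolding M_def using that by (intro Max_ge) auto
  have "cov I \<le> mu_i K i" if "card I = i" for I
    unfolding cov_def using covering_radius_coord_section_le_mu_i[OF assms(1,2), of I] that by simp
  then have "M \<le> mu_i K i"
    unfolding M_def using \<open>card I\<^sub>0 = i\<close> by (intro Max.boundedI) auto
  moreover have "mu_i K i \<le> M + e" if "0 < e" for e
    using cov_le_M \<open>0 < e\<close> unfolding cov_def
    by (intro mu_i_le_if_covering_radii_less[OF \<open>convex K\<close> assms(2,4)]) fastforce
  ultimately show ?thesis
    unfolding M_def cov_def by (meson antisym field_le_epsilon)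
qed

end
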